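(* Suppose $A$ and $B$ are compact subsets of $\mathbb{R}$ and there exist $a_1, a_2 \in A$ and $b_1, b_2 \in B$ with $a_1 \leq b_1 \leq a_2 \leq b_2$. Then $A$ and $B$ are interleaved. Moreover, if $$\min\{ b_1 - a_1,\ a_2 - b_1,\ b_2 - a_2\} \geq 2\epsilon$$ for some $\epsilon > 0$, then $A$ and $B$ are $\epsilon$-strongly interleaved.
   Context: For a compact set $C \subset \mathbb{R}$, a gap of $C$ is a maximal connected component of $\mathbb{R} \setminus C$ (including the two unbounded components). Two compact sets $C_1, C_2 \subset \mathbb{R}$ are interleaved if neither set is contained in a gap of the other. The Hausdorff distance between compact sets is $d_{\mathrm{H}}(X,Y) = \max\{\sup_{x\in X} d(x,Y), \sup_{y \in Y} d(y,X)\}$. For $\epsilon > 0$, compact sets $A, B$ are $\epsilon$-strongly interleaved if $A'$ and $B'$ are interleaved whenever $A', B'$ are compact subsets of $\mathbb{R}$ with $d_{\mathrm{H}}(A,A') \le \epsilon$ and $d_{\mathrm{H}}(B,B') \le \epsilon$. *)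

theory Defs
  imports "HOL-Analysis.Analysis"
begin

definition gap :: "real set \<Rightarrow> real set \<Rightarrow> bool" where
  "gap C G \<longleftrightarrow> (\<exists>x. x \<notin> C \<and> G = connected_component_set (- C) x)"

definition interleaved :: "real set \<Rightarrow> real set \<Rightarrow> bool" where
  "interleaved C1 C2 \<longleftrightarrow>
     \<not> (\<exists>G. gap C2 G \<and> C1 \<subseteq> G) \<and> \<not> (\<exists>G. gap C1 G \<and> C2 \<subseteq> G)"

text \<open>Hausdorff distance (for nonempty compact sets).\<close>
definition hausdorff_dist :: "real set \<Rightarrow> real set \<Rightarrow> real" where
  "hausdorff_dist X Y = max (Sup ((\<lambda>x. infdist x Y) ` X)) (Sup ((\<lambda>y. infdist y X) ` Y))"

definition strongly_interleaved :: "real \<Rightarrow> real set \<Rightarrow> real set \<Rightarrow> bool" where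
  "strongly_interleaved \<epsilon> A B \<longleftrightarrow>
     (\<forall>A' B'. compact A' \<and> A' \<noteq> {} \<and> compact B' \<and> B' \<noteq> {} \<and>
        hausdorff_dist A A' \<le> \<epsilon> \<and> hausdorff_dist B B' \<le> \<epsilon> \<longrightarrow> interleaved A' B')"

end

theory Submission
  imports Defs
begin

text \<open>A gap of C is an interval disjoint from C, so it cannot contain two points of a set that are
  separated by a point of C; hence alternating points a1 \<le> b1 \<le> a2 \<le> b2 force interleaving.
  A compact set within Hausdorff distance \<epsilon> of A has a point within \<epsilon> of each point of A,
  so moving each of the four points by at most \<epsilon> keeps them alternating when consecutive
  points are at least 2\<epsilon> apart.\<close>

lemma gap_disjoint_closed_segment:
  fixes C G :: "real set"
  assumes "gap C G" "x \<in> G" "z \<in> G"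
  shows "{x..z} \<inter> C = {}"
proof -
  from assms(1) obtain w where G: "G = connected_component_set (- C) w"
    unfolding gap_def by blast
  then have "{x..z} \<subseteq> G"
    using connected_contains_Icc[OF connected_connected_component assms(2,3)[unfolded G]] by simp
  moreover have "G \<subseteq> - C"
    using G connected_component_subset by blast
  ultimately show ?thesis by blast
qed

lemma interleaved_if_alternating:
  fixes A B :: "real set"
  assumes "a1 \<in> A" "a2 \<in> A" "b1 \<in> B" "b2 \<in> B" "a1 \<le> b1" "b1 \<le> a2" "a2 \<le> b2"
  shows "interleaved A B"
proof -
  have "\<not> A \<subseteq> G" if "gap B G" for G
  proof
    assume "A \<subseteq> G"
    then have "{a1..a2} \<inter> B = {}"
      using gap_disjoint_closed_segment[OF that] assms(1,2) by blast
    then show False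
      using assms(3,5,6) by auto
  qed
  moreover have "\<not> B \<subseteq> G" if "gap A G" for G
  proof
    assume "B \<subseteq> G"
    then have "{b1..b2} \<inter> A = {}"
      using gap_disjoint_closed_segment[OF that] assms(3,4) by blast
    then show False
      using assms(2,6,7) by auto
  qed
  ultimately show ?thesis
    unfolding interleaved_def by blast
qed

lemma hausdorff_dist_obtains_close_point:
  fixes A A' :: "real set"
  assumes "compact A" "closed A'" "A' \<noteq> {}" "hausdorff_dist A A' \<le> e" "a \<in> A"
  obtains a' where "a' \<in> A'" "\<bar>a - a'\<bar> \<le> e"
proof -
  have "compact ((\<lambda>x. infdist x A') ` A)"
    using assms(1) by (intro compact_continuous_image continuous_on_infdist continuous_on_id)
  then have "bdd_above ((\<lambda>x. infdist x A') ` A)"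
    by (meson bounded_imp_bdd_above compact_imp_bounded)
  then have "infdist a A' \<le> Sup ((\<lambda>x. infdist x A') ` A)"
    using assms(5) by (rule cSUP_upper[rotated])
  also have "\<dots> \<le> e"
    using assms(4) unfolding hausdorff_dist_def by simp
  finally have "infdist a A' \<le> e" .
  moreover obtain a' where "a' \<in> A'" "infdist a A' = dist a a'"
    using infdist_attains_inf[OF assms(2,3)] by blast
  ultimately show ?thesis
    using that by (simp add: dist_real_def)
qed

theorem lemma2p3:
  fixes A B :: "real set" and a1 a2 b1 b2 :: real
  assumes "compact A" and "compact B"
    and "a1 \<in> A" and "a2 \<in> A" and "b1 \<in> B" and "b2 \<in> B"
    and "a1 \<le> b1" and "b1 \<le> a2" and "a2 \<le> b2"
  shows "interleaved A B \<and>
    (\<forall>\<epsilon>>0. min (b1 - a1) (min (a2 - b1) (b2 - a2)) \<ge> 2 * \<epsilon> \<longrightarrow>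
       strongly_interleaved \<epsilon> A B)"
proof (intro conjI allI impI)
  show "interleaved A B"
    using interleaved_if_alternating assms by blast
next
  fix e :: real
  assume spacing: "min (b1 - a1) (min (a2 - b1) (b2 - a2)) \<ge> 2 * e"
  show "strongly_interleaved e A B"
    unfolding strongly_interleaved_def
  proof (intro allI impI, elim conjE)
    fix A' B'
    assume "compact A'" "A' \<noteq> {}" "compact B'" "B' \<noteq> {}"
      and "hausdorff_dist A A' \<le> e" "hausdorff_dist B B' \<le> e"
    note close_A = hausdorff_dist_obtains_close_point[OF assms(1) compact_imp_closed[OF \<open>compact A'\<close>]
        \<open>A' \<noteq> {}\<close> \<open>hausdorff_dist A A' \<le> e\<close>]
    note close_B = hausdorff_dist_obtains_close_point[OF assms(2) compact_imp_closed[OF \<open>compact B'\<close>]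
        \<open>B' \<noteq> {}\<close> \<open>hausdorff_dist B B' \<le> e\<close>]
    obtain x1 where "x1 \<in> A'" "\<bar>a1 - x1\<bar> \<le> e" using close_A[OF assms(3)] .
    obtain x2 where "x2 \<in> A'" "\<bar>a2 - x2\<bar> \<le> e" using close_A[OF assms(4)] .
    obtain y1 where "y1 \<in> B'" "\<bar>b1 - y1\<bar> \<le> e" using close_B[OF assms(5)] .
    obtain y2 where "y2 \<in> B'" "\<bar>b2 - y2\<bar> \<le> e" using close_B[OF assms(6)] .
    show "interleaved A' B'"
      by (rule interleaved_if_alternating[OF \<open>x1 \<in> A'\<close> \<open>x2 \<in> A'\<close> \<open>y1 \<in> B'\<close> \<open>y2 \<in> B'\<close>])
        (use spacing \<open>\<bar>a1 - x1\<bar> \<le> e\<close> \<open>\<bar>a2 - x2\<bar> \<le> e\<close> \<open>\<bar>b1 - y1\<bar> \<le> e\<close> \<open>\<bar>b2 - y2\<bar> \<le> e\<close>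
          in \<open>auto simp: abs_le_iff\<close>)
  qed
qed

end
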